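(* For every $x\in(0,1)$, $$\Gamma(x,1-x)\ \le\ \Gamma(x)\Gamma(1-x)=\frac{\pi}{\sin(\pi x)}.$$
   Context: For $x>0,y>0$ the Bigamma function is the (convergent) improper integral $\Gamma(x,y):=\int_0^1(-\ln t)^{x-1}\big(-\ln(1-t)\big)^{y-1}\,dt$. $\Gamma(x)$ (one argument) denotes Euler's gamma function. *)

theory Defs
  imports "HOL-Analysis.Analysis"
begin

definition bigamma_integrand :: "real \<Rightarrow> real \<Rightarrow> real \<Rightarrow> real" where
  "bigamma_integrand x y t = (- ln t) powr (x - 1) * (- ln (1 - t)) powr (y - 1)"

text \<open>Bigamma function: the (improper) integral over (0,1). The integrand is
  nonnegative, so the improper integral coincides with the (absolutely convergent)
  integral over the open interval.\<close>
definition Bigamma :: "real \<Rightarrow> real \<Rightarrow> real" where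
  "Bigamma x y = integral {0<..<1} (bigamma_integrand x y)"

end

theory Submission
  imports Defs
begin

text \<open>On \<open>(0,1)\<close> we have \<open>-ln t \<ge> 1 - t\<close> and \<open>-ln (1 - t) \<ge> t\<close>. For exponents
  \<open>x - 1, y - 1 \<le> 0\<close> these reverse under powers, so the Bigamma integrand is dominated by the
  Beta integrand \<open>t powr (y - 1) * (1 - t) powr (x - 1)\<close>. Hence \<open>\<Gamma>(x,y) \<le> B(x,y) = \<Gamma>(x)\<Gamma>(y)/\<Gamma>(x+y)\<close>, and for
  \<open>y = 1 - x\<close> the right-hand side is \<open>\<Gamma>(x)\<Gamma>(1-x) = \<pi>/sin(\<pi>x)\<close> by Euler's reflection formula.\<close>

lemma Gamma_reflection_real:
  fixes x :: real
  shows "Gamma x * Gamma (1 - x) = pi / sin (pi * x)"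
proof -
  have "Gamma (1 - complex_of_real x) = complex_of_real (Gamma (1 - x))"
    using Gamma_complex_of_real[of "1 - x"] by simp
  moreover have "sin (complex_of_real pi * complex_of_real x) = complex_of_real (sin (pi * x))"
    using sin_of_real[of "pi * x"] by simp
  ultimately have "complex_of_real (Gamma x * Gamma (1 - x)) = complex_of_real (pi / sin (pi * x))"
    using Gamma_reflection_complex[of "complex_of_real x"] by (simp add: Gamma_complex_of_real)
  then show ?thesis
    by (simp only: of_real_eq_iff)
qed

lemma has_integral_Beta_real_Ioo:
  fixes a b :: real
  assumes "a > 0" "b > 0"
  shows "((\<lambda>t. t powr (a - 1) * (1 - t) powr (b - 1)) has_integral Beta a b) {0<..<1}"
  using has_integral_Beta_real[OF assms] by (simp add: has_integral_Icc_iff_Ioo)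

lemma bigamma_integrand_le_Beta_integrand:
  fixes x y t :: real
  assumes "x \<le> 1" "y \<le> 1" "t \<in> {0<..<1}"
  shows "bigamma_integrand x y t \<le> t powr (y - 1) * (1 - t) powr (x - 1)"
proof -
  have t: "0 < t" "t < 1"
    using assms(3) by auto
  have "1 - t \<le> - ln t"
    using ln_le_minus_one[of t] t by linarith
  then have left: "(- ln t) powr (x - 1) \<le> (1 - t) powr (x - 1)"
    using assms(1) t by (intro powr_mono2') auto
  have "t \<le> - ln (1 - t)"
    using ln_le_minus_one[of "1 - t"] t by linarith
  then have right: "(- ln (1 - t)) powr (y - 1) \<le> t powr (y - 1)"
    using assms(2) t by (intro powr_mono2') auto
  have "bigamma_integrand x y t \<le> (1 - t) powr (x - 1) * t powr (y - 1)"
    unfolding bigamma_integrand_def using left right by (intro mult_mono) auto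
  then show ?thesis
    by (simp only: mult.commute)
qed

lemma bigamma_integrand_integrable:
  fixes x y :: real
  assumes "0 < x" "x \<le> 1" "0 < y" "y \<le> 1"
  shows "bigamma_integrand x y integrable_on {0<..<1}"
proof (rule measurable_bounded_by_integrable_imp_integrable)
  have "continuous_on {0<..<1} (bigamma_integrand x y)"
    unfolding bigamma_integrand_def by (intro continuous_intros) auto
  then show "bigamma_integrand x y \<in> borel_measurable (lebesgue_on {0<..<1})"
    by (rule continuous_imp_measurable_on_sets_lebesgue) auto
  show "(\<lambda>t. t powr (y - 1) * (1 - t) powr (x - 1)) integrable_on {0<..<1}"
    using has_integral_Beta_real_Ioo[of y x] assms by blast
  show "norm (bigamma_integrand x y t) \<le> t powr (y - 1) * (1 - t) powr (x - 1)"
    if "t \<in> {0<..<1}" for t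
    using bigamma_integrand_le_Beta_integrand[OF assms(2,4) that]
    by (simp add: bigamma_integrand_def)
qed auto

lemma Bigamma_le_Beta:
  fixes x y :: real
  assumes "0 < x" "x \<le> 1" "0 < y" "y \<le> 1"
  shows "Bigamma x y \<le> Beta x y"
proof -
  have "Bigamma x y \<le> integral {0<..<1} (\<lambda>t. t powr (y - 1) * (1 - t) powr (x - 1))"
    unfolding Bigamma_def
    using bigamma_integrand_integrable[OF assms] has_integral_Beta_real_Ioo[of y x] assms
    by (intro integral_le bigamma_integrand_le_Beta_integrand) auto
  also have "\<dots> = Beta x y"
    using has_integral_Beta_real_Ioo[of y x] assms by (simp add: integral_unique Beta_commute)
  finally show ?thesis .
qed

theorem mainTheorem10:
  fixes x :: real
  assumes "0 < x" and "x < 1"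
  shows "bigamma_integrand x (1 - x) integrable_on {0<..<1}
    \<and> Bigamma x (1 - x) \<le> Gamma x * Gamma (1 - x)
    \<and> Gamma x * Gamma (1 - x) = pi / sin (pi * x)"
proof -
  have "Beta x (1 - x) = Gamma x * Gamma (1 - x)"
    by (simp add: Beta_def)
  then show ?thesis
    using bigamma_integrand_integrable[of x "1 - x"] Bigamma_le_Beta[of x "1 - x"]
      Gamma_reflection_real[of x] assms
    by simp
qed

end
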